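(* Let $\mathsf A$ be the Manacher array of some string of length $n$, and let $\mathsf F$ be the corresponding palindromic fingerprint. Let $G=G(\mathsf F)$ be its restriction graph. Then: (i) For every proper vertex coloring $\psi:V(G)\to\Sigma$ that uses exactly $k$ colors, the string $T=\psi'(1)\psi'(2)\cdots\psi'(n)$, where $\psi'(i)=\psi(C)$ for the unique vertex $C$ with $i\in C$, has Manacher array $\mathsf A$ and exactly $k$ distinct symbols. (ii) Conversely, for every string $T$ of length $n$ with Manacher array $\mathsf A$, the map $\psi(C):=T[i]$ for any $i\in C$ is well defined and is a proper vertex coloring of $G$, and these two constructions are mutually inverse. In particular, the minimum number of distinct symbols in a string with Manacher array $\mathsf A$ equals $\chi(G)$.
   Context: A substring $S[i..j]$ (including the empty substring $S[i..i-1]$) is a maximal palindrome of $S$ if it is a palindrome and $S[i-1..j+1]$ is either undefined (i.e. $i=1$ or $j=|S|$) or not a palindrome. The palindromic fingerprint $\mathsf F$ of a string $S$ of length $n$ is the set of pairs $(i,j)$ such that $S[i..j]$ is a maximal palindrome (with $(i,i-1)$ for empty ones); $|\mathsf F|:=n$. The fingerprint and the Manacher array determine each other. A string $T$ is a reconstruction of $\mathsf F$ if $|T|=n$ and the fingerprint of $T$ is $\mathsf F$. Equality graph $G_=(\mathsf F)$: vertex set $\{1,\dots,n\}$, with $i,j$ ($i<j$) adjacent iff there is $(a,b)\in\mathsf F$ with $a\le i<j\le b$ and $i+j=a+b$ (so $T[i]=T[j]$ in every reconstruction). Restriction graph $G(\mathsf F)$: its vertices are the connected components $C_1,\dots,C_\ell$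 of $G_=(\mathsf F)$ (these partition $\{1,\dots,n\}$), and $C,C'$ are adjacent iff there exist $i\in C$, $j\in C'$ with $1\le i<j\le n$ and $(i+1,j-1)\in\mathsf F$. A proper coloring assigns colors to vertices so that adjacent vertices get different colors; $\chi(G)$ is the chromatic number. The Manacher array of $S$ of length $n$: $\mathsf A[2k-1]$ is the largest $r\ge0$ with $S[k-r..k+r]$ a palindrome inside $S$, and $\mathsf A[2k]$ the largest $r\ge0$ with $S[k-r+1..k+r]$ a palindrome inside $S$. *)

theory Defs
  imports Main
begin

text \<open>Strings are lists; positions are 1-based as in the paper: S[i] = S ! (i - 1).\<close>

definition pal :: "'a list \<Rightarrow> nat \<Rightarrow> nat \<Rightarrow> bool" where
  "pal S i j \<longleftrightarrow> (\<forall>k. i \<le> k \<and> k \<le> j \<longrightarrow> S ! (k - 1) = S ! (i + j - k - 1))"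

text \<open>Manacher array as a list of length 2n: entry m (1-based) is A[m].\<close>
definition manacher :: "'a list \<Rightarrow> nat list" where
  "manacher S = map (\<lambda>m.
      if odd m then
        (GREATEST r. r + 1 \<le> (m + 1) div 2 \<and> (m + 1) div 2 + r \<le> length S
                     \<and> pal S ((m + 1) div 2 - r) ((m + 1) div 2 + r))
      else
        (GREATEST r. r \<le> m div 2 \<and> m div 2 + r \<le> length S
                     \<and> pal S (m div 2 - r + 1) (m div 2 + r)))
    [1..<2 * length S + 1]"

definition fingerprint :: "'a list \<Rightarrow> (nat \<times> nat) set" where
  "fingerprint S = {(i, j). 1 \<le> i \<and> j \<le> length S \<and> i \<le> j + 1 \<and> pal S i j
        \<and> (i = 1 \<or> j = length S \<or> \<not> pal S (i - 1) (j + 1))}"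

definition eq_edge :: "(nat \<times> nat) set \<Rightarrow> nat \<Rightarrow> nat \<Rightarrow> nat \<Rightarrow> bool" where
  "eq_edge F n i j \<longleftrightarrow> 1 \<le> i \<and> i < j \<and> j \<le> n \<and>
      (\<exists>(a, b) \<in> F. a \<le> i \<and> j \<le> b \<and> i + j = a + b)"

definition eq_rel :: "(nat \<times> nat) set \<Rightarrow> nat \<Rightarrow> (nat \<times> nat) set" where
  "eq_rel F n = {(i, j). eq_edge F n i j \<or> eq_edge F n j i}\<^sup>* \<inter> ({1..n} \<times> {1..n})"

definition verts :: "(nat \<times> nat) set \<Rightarrow> nat \<Rightarrow> nat set set" where
  "verts F n = {1..n} // eq_rel F n"

definition comp :: "(nat \<times> nat) set \<Rightarrow> nat \<Rightarrow> nat \<Rightarrow> nat set" where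
  "comp F n i = eq_rel F n `` {i}"

definition adj :: "(nat \<times> nat) set \<Rightarrow> nat \<Rightarrow> nat set \<Rightarrow> nat set \<Rightarrow> bool" where
  "adj F n C C' \<longleftrightarrow>
     (\<exists>i\<in>C. \<exists>j\<in>C'. 1 \<le> i \<and> i < j \<and> j \<le> n \<and> (i + 1, j - 1) \<in> F) \<or>
     (\<exists>i\<in>C'. \<exists>j\<in>C. 1 \<le> i \<and> i < j \<and> j \<le> n \<and> (i + 1, j - 1) \<in> F)"

definition proper_coloring :: "(nat \<times> nat) set \<Rightarrow> nat \<Rightarrow> (nat set \<Rightarrow> 'b) \<Rightarrow> bool" where
  "proper_coloring F n \<psi> \<longleftrightarrow>
     (\<forall>C\<in>verts F n. \<forall>C'\<in>verts F n. adj F n C C' \<longrightarrow> \<psi> C \<noteq> \<psi> C')"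

definition chromatic_number :: "(nat \<times> nat) set \<Rightarrow> nat \<Rightarrow> nat" where
  "chromatic_number F n =
     (LEAST k. \<exists>\<psi> :: nat set \<Rightarrow> nat. proper_coloring F n \<psi> \<and> card (\<psi> ` verts F n) = k)"

definition string_of :: "(nat \<times> nat) set \<Rightarrow> nat \<Rightarrow> (nat set \<Rightarrow> 'b) \<Rightarrow> 'b list" where
  "string_of F n \<psi> = map (\<lambda>i. \<psi> (comp F n i)) [1..<n + 1]"

definition coloring_of :: "'b list \<Rightarrow> nat set \<Rightarrow> 'b" where
  "coloring_of T C = T ! ((SOME i. i \<in> C) - 1)"

end

theory Submission
  imports Defs
begin

text \<open>The Manacher array of a string records, for every centre, the largest palindromic radius, and
  palindromes are closed under shrinking around their centre; so two strings of equal length have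
  the same Manacher array iff they have the same palindromes. Every palindrome of S extends
  concentrically to a maximal one, and a palindrome T[i+1..j-1] extends to T[i..j] iff T[i] = T[j].
  Hence T has the palindromes of S iff every maximal palindrome of S is a palindrome of T and
  T[i] \<noteq> T[j] whenever S[i+1..j-1] is a maximal palindrome that can still be extended within
  the string. The first condition says that T is constant on the components of the equality
  graph, the second that the induced colouring of the restriction graph is proper.\<close>

lemma pal_trivial: "j \<le> i \<Longrightarrow> i \<le> j + 1 \<Longrightarrow> pal S i j"
  unfolding pal_def by (auto simp: le_Suc_eq)

lemma pal_iff_ends:
  assumes "i < j"
  shows "pal S i j \<longleftrightarrow> S ! (i - 1) = S ! (j - 1) \<and> pal S (i + 1) (j - 1)"
proof
  assume p: "pal S i j"
  have "S ! (i - 1) = S ! (j - 1)" using p[unfolded pal_def, rule_format, of i] assms by simp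
  moreover have "pal S (i + 1) (j - 1)"
    unfolding pal_def
  proof (intro allI impI)
    fix k assume "i + 1 \<le> k \<and> k \<le> j - 1"
    then show "S ! (k - 1) = S ! (i + 1 + (j - 1) - k - 1)"
      using p[unfolded pal_def, rule_format, of k] assms by auto
  qed
  ultimately show "S ! (i - 1) = S ! (j - 1) \<and> pal S (i + 1) (j - 1)" ..
next
  assume ends: "S ! (i - 1) = S ! (j - 1) \<and> pal S (i + 1) (j - 1)"
  show "pal S i j"
    unfolding pal_def
  proof (intro allI impI)
    fix k assume k: "i \<le> k \<and> k \<le> j"
    show "S ! (k - 1) = S ! (i + j - k - 1)"
    proof (cases "k = i \<or> k = j")
      case True
      then show ?thesis using ends assms by auto
    next
      case False
      then have "i + 1 \<le> k \<and> k \<le> j - 1" using k by auto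
      then show ?thesis using ends[THEN conjunct2, unfolded pal_def, rule_format, of k] assms by auto
    qed
  qed
qed

lemma pal_concentric:
  assumes "pal S a b" "a \<le> i" "i + j = a + b"
  shows "pal S i j"
  unfolding pal_def
proof (intro allI impI)
  fix k assume "i \<le> k \<and> k \<le> j"
  then show "S ! (k - 1) = S ! (i + j - k - 1)"
    using assms(1)[unfolded pal_def, rule_format, of k] assms(2,3) by auto
qed

lemma fingerprintD:
  assumes "(a, b) \<in> fingerprint S"
  shows "pal S a b" "1 \<le> a" "b \<le> length S" "a \<le> b + 1"
  using assms unfolding fingerprint_def by auto

lemma pal_extends_to_fingerprint:
  "pal S i j \<Longrightarrow> 1 \<le> i \<Longrightarrow> i \<le> j + 1 \<Longrightarrow> j \<le> length S \<Longrightarrow>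
   \<exists>(a, b) \<in> fingerprint S. a \<le> i \<and> a + b = i + j"
proof (induction i arbitrary: j rule: less_induct)
  case (less i)
  show ?case
  proof (cases "i = 1 \<or> j = length S \<or> \<not> pal S (i - 1) (j + 1)")
    case True
    then have "(i, j) \<in> fingerprint S" using less.prems unfolding fingerprint_def by auto
    then show ?thesis by blast
  next
    case False
    then have "pal S (i - 1) (j + 1)" "1 \<le> i - 1" "j + 1 \<le> length S"
      using less.prems by auto
    with less.IH[of "i - 1" "j + 1"] less.prems
    have "\<exists>(a, b) \<in> fingerprint S. a \<le> i - 1 \<and> a + b = i - 1 + (j + 1)"
      by auto
    then obtain a b where "(a, b) \<in> fingerprint S" "a \<le> i - 1" "a + b = i - 1 + (j + 1)"
      by blast
    then show ?thesis using less.prems by (intro bexI[of _ "(a, b)"]) auto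
  qed
qed

lemma le_Greatest_iff_downward_closed:
  fixes P :: "nat \<Rightarrow> bool"
  assumes "P 0" and bounded: "\<And>r. P r \<Longrightarrow> r \<le> b" and closed: "\<And>r s. P r \<Longrightarrow> s \<le> r \<Longrightarrow> P s"
  shows "s \<le> (GREATEST r. P r) \<longleftrightarrow> P s"
proof
  assume "s \<le> (GREATEST r. P r)"
  moreover have "P (GREATEST r. P r)" using GreatestI_nat[of P 0 b] assms by blast
  ultimately show "P s" using closed by blast
qed (use Greatest_le_nat[of P _ b] bounded in blast)

lemma length_manacher: "length (manacher S) = 2 * length S"
  unfolding manacher_def by (simp del: upt_Suc)

text \<open>The entry with 0-based index m of the Manacher array measures the palindromes S[i..j] with
  i + j = m + 2; both parities are written with the same radius r = j - (m div 2 + 1).\<close>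

lemma manacher_nth:
  assumes "m < 2 * length S"
  shows "manacher S ! m = (GREATEST r. r < (m + 3) div 2 \<and> m div 2 + 1 + r \<le> length S
                                      \<and> pal S ((m + 3) div 2 - r) (m div 2 + 1 + r))"
    (is "_ = ?rhs")
proof -
  have "manacher S ! m = (if odd (m + 1) then
        (GREATEST r. r + 1 \<le> (m + 2) div 2 \<and> (m + 2) div 2 + r \<le> length S
                     \<and> pal S ((m + 2) div 2 - r) ((m + 2) div 2 + r))
      else
        (GREATEST r. r \<le> (m + 1) div 2 \<and> (m + 1) div 2 + r \<le> length S
                     \<and> pal S ((m + 1) div 2 - r + 1) ((m + 1) div 2 + r)))"
    using assms unfolding manacher_def by (simp del: upt_Suc)
  also have "\<dots> = ?rhs"
  proof (cases "even m")
    case True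
    then obtain t where "m = 2 * t" by blast
    then show ?thesis by (simp add: less_Suc_eq_le)
  next
    case False
    then obtain t where m: "m = 2 * t + 1" by (blast elim: oddE)
    have "(r \<le> t + 1 \<and> t + 1 + r \<le> length S \<and> pal S (t + 1 - r + 1) (t + 1 + r)) \<longleftrightarrow>
          (r < t + 2 \<and> t + 1 + r \<le> length S \<and> pal S (t + 2 - r) (t + 1 + r))" for r
      by (cases "r \<le> t + 1") (simp_all add: Suc_diff_le)
    then show ?thesis using m by simp
  qed
  finally show ?thesis .
qed

lemma pal_iff_le_manacher:
  assumes "1 \<le> i" "i \<le> j" "j \<le> length S"
  shows "pal S i j \<longleftrightarrow> (j - i + 1) div 2 \<le> manacher S ! (i + j - 2)"
proof -
  define m where "m = i + j - 2"
  define lo where "lo = (m + 3) div 2"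
  define hi where "hi = m div 2 + 1"
  define P where "P r \<longleftrightarrow> r < lo \<and> hi + r \<le> length S \<and> pal S (lo - r) (hi + r)" for r
  have lo_hi: "lo + hi = m + 2" "hi \<le> lo" "lo \<le> hi + 1"
    unfolding lo_def hi_def by auto
  have ij: "hi + (j - i + 1) div 2 = j \<and> lo - (j - i + 1) div 2 = i"
  proof (cases "even m")
    case True
    then obtain u where u: "m = 2 * u" by blast
    then have "j - i + 1 = 2 * (u + 1 - i) + 1" using assms unfolding m_def by linarith
    then show ?thesis using u assms unfolding m_def hi_def lo_def by simp
  next
    case False
    then obtain u where u: "m = 2 * u + 1" by (blast elim: oddE)
    then have "j - i + 1 = 2 * (u + 2 - i)" using assms unfolding m_def by linarith
    then show ?thesis using u assms unfolding m_def hi_def lo_def by simp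
  qed
  have "P 0"
    using assms lo_hi ij unfolding P_def by (auto intro: pal_trivial)
  moreover have "\<And>r. P r \<Longrightarrow> r \<le> lo"
    unfolding P_def by simp
  moreover have "P s" if "P r" "s \<le> r" for r s
    using that pal_concentric[of S "lo - r" "hi + r" "lo - s" "hi + s"] unfolding P_def by auto
  ultimately have "(j - i + 1) div 2 \<le> (GREATEST r. P r) \<longleftrightarrow> P ((j - i + 1) div 2)"
    by (rule le_Greatest_iff_downward_closed)
  moreover have "P ((j - i + 1) div 2) \<longleftrightarrow> pal S i j"
    using assms ij unfolding P_def by auto
  moreover have "manacher S ! m = (GREATEST r. P r)"
    using assms manacher_nth[of m S] unfolding P_def lo_def hi_def m_def by simp
  ultimately show ?thesis unfolding m_def by simp
qed

definition same_pals :: "'a list \<Rightarrow> 'b list \<Rightarrow> bool" where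
  "same_pals S T \<longleftrightarrow> length T = length S \<and>
     (\<forall>i j. 1 \<le> i \<longrightarrow> i \<le> j \<longrightarrow> j \<le> length S \<longrightarrow> pal T i j = pal S i j)"

lemma same_palsD:
  assumes "same_pals S T" "1 \<le> i" "i \<le> j + 1" "j \<le> length S"
  shows "pal T i j = pal S i j"
proof (cases "i \<le> j")
  case False
  then show ?thesis using assms(3) pal_trivial by (metis not_le_imp_less less_imp_le_nat)
qed (use assms in \<open>auto simp: same_pals_def\<close>)

lemma manacher_eq_iff_same_pals: "manacher T = manacher S \<longleftrightarrow> same_pals S T"
proof
  assume eq: "manacher T = manacher S"
  then have "length T = length S" using length_manacher[of T] length_manacher[of S] by simp
  with eq show "same_pals S T"
    unfolding same_pals_def by (auto simp: pal_iff_le_manacher[of _ _ S] pal_iff_le_manacher[of _ _ T])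
next
  assume same: "same_pals S T"
  then have len: "length T = length S" unfolding same_pals_def by simp
  show "manacher T = manacher S"
  proof (rule nth_equalityI)
    show "length (manacher T) = length (manacher S)" using len by (simp add: length_manacher)
    fix m assume "m < length (manacher T)"
    then have "m < 2 * length S" using len by (simp add: length_manacher)
    moreover have "pal T ((m + 3) div 2 - r) (m div 2 + 1 + r) = pal S ((m + 3) div 2 - r) (m div 2 + 1 + r)"
      if "r < (m + 3) div 2" "m div 2 + 1 + r \<le> length S" for r
      using same_palsD[OF same] that by simp
    ultimately show "manacher T ! m = manacher S ! m"
      using len by (simp add: manacher_nth cong: conj_cong)
  qed
qed

lemma pal_if_fingerprint_ends_differ:
  assumes ends: "\<And>i j. 1 \<le> i \<Longrightarrow> i < j \<Longrightarrow> j \<le> length S \<Longrightarrow> (i + 1, j - 1) \<in> fingerprint S \<Longrightarrow>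
      T ! (i - 1) \<noteq> T ! (j - 1)"
  shows "pal T i j \<Longrightarrow> 1 \<le> i \<Longrightarrow> i \<le> j + 1 \<Longrightarrow> j \<le> length S \<Longrightarrow> pal S i j"
proof (induction "j - i" arbitrary: i j rule: less_induct)
  case less
  show ?case
  proof (cases "i < j")
    case False
    then show ?thesis using less.prems pal_trivial[of j i S] by simp
  next
    case True
    then have "T ! (i - 1) = T ! (j - 1)" "pal T (i + 1) (j - 1)"
      using pal_iff_ends less.prems by blast+
    moreover have "pal S (i + 1) (j - 1)"
      using less.hyps[of "j - 1" "i + 1"] \<open>pal T (i + 1) (j - 1)\<close> True less.prems by auto
    ultimately have "(i + 1, j - 1) \<notin> fingerprint S" if "\<not> pal S i j"
      using ends True less.prems by auto
    then show ?thesis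
      using \<open>pal S (i + 1) (j - 1)\<close> True less.prems unfolding fingerprint_def by force
  qed
qed

lemma same_pals_iff_fingerprint:
  "same_pals S T \<longleftrightarrow> length T = length S \<and> (\<forall>(a, b) \<in> fingerprint S. pal T a b) \<and>
     (\<forall>i j. 1 \<le> i \<longrightarrow> i < j \<longrightarrow> j \<le> length S \<longrightarrow> (i + 1, j - 1) \<in> fingerprint S \<longrightarrow>
        T ! (i - 1) \<noteq> T ! (j - 1))"
  (is "_ \<longleftrightarrow> _ \<and> ?keeps \<and> ?breaks")
proof
  assume same: "same_pals S T"
  then have len: "length T = length S" unfolding same_pals_def by simp
  have keeps: ?keeps
  proof clarify
    fix a b assume "(a, b) \<in> fingerprint S"
    then show "pal T a b" using same_palsD[OF same, of a b] fingerprintD[of a b S] by simp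
  qed
  have ?breaks
  proof (intro allI impI)
    fix i j assume ij: "1 \<le> i" "i < j" "j \<le> length S" and F: "(i + 1, j - 1) \<in> fingerprint S"
    then have "\<not> pal S i j" unfolding fingerprint_def by auto
    then have "\<not> pal T i j" using same_palsD[OF same] ij by simp
    moreover have "pal T (i + 1) (j - 1)" using keeps F by blast
    ultimately show "T ! (i - 1) \<noteq> T ! (j - 1)" using pal_iff_ends[OF \<open>i < j\<close>] by blast
  qed
  with len keeps show "length T = length S \<and> ?keeps \<and> ?breaks" by blast
next
  assume conds: "length T = length S \<and> ?keeps \<and> ?breaks"
  have "pal T i j \<longleftrightarrow> pal S i j" if "1 \<le> i" "i \<le> j" "j \<le> length S" for i j
  proof
    assume "pal S i j"
    then have "\<exists>(a, b) \<in> fingerprint S. a \<le> i \<and> a + b = i + j"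
      using pal_extends_to_fingerprint[OF \<open>pal S i j\<close>] that by simp
    then obtain a b where "(a, b) \<in> fingerprint S" "a \<le> i" "a + b = i + j"
      by blast
    with conds show "pal T i j" using pal_concentric by fastforce
  next
    assume "pal T i j"
    with conds that show "pal S i j"
      by (intro pal_if_fingerprint_ends_differ[of S T]) auto
  qed
  with conds show "same_pals S T" unfolding same_pals_def by blast
qed

lemma equiv_eq_rel: "equiv {1..n} (eq_rel F n)"
proof -
  define E where "E = {(i, j). eq_edge F n i j \<or> eq_edge F n j i}"
  have "sym (E\<^sup>*)" unfolding E_def by (intro sym_rtrancl) (auto simp: sym_def)
  moreover have "eq_rel F n = E\<^sup>* \<inter> ({1..n} \<times> {1..n})" unfolding eq_rel_def E_def by simp
  ultimately show ?thesis
    unfolding equiv_def refl_on_def sym_def trans_def by (auto intro: rtrancl_trans)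
qed

lemma verts_eq_image_comp: "verts F n = comp F n ` {1..n}"
  unfolding verts_def quotient_def comp_def by auto

lemma comp_self: "i \<in> {1..n} \<Longrightarrow> i \<in> comp F n i"
  unfolding comp_def using equiv_class_self[OF equiv_eq_rel] by blast

lemma comp_eq_iff:
  "i \<in> {1..n} \<Longrightarrow> j \<in> {1..n} \<Longrightarrow> comp F n i = comp F n j \<longleftrightarrow> (i, j) \<in> eq_rel F n"
  unfolding comp_def by (rule eq_equiv_class_iff[OF equiv_eq_rel])

lemma eq_edge_in_eq_rel: "eq_edge F n i j \<Longrightarrow> (i, j) \<in> eq_rel F n"
  unfolding eq_rel_def eq_edge_def by auto

lemma verts_memD:
  assumes "C \<in> verts F n" "x \<in> C"
  shows "x \<in> {1..n}" "C = comp F n x"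
proof -
  obtain i where i: "i \<in> {1..n}" "C = comp F n i" using assms(1) verts_eq_image_comp by blast
  then have "(i, x) \<in> eq_rel F n" using assms(2) unfolding comp_def by auto
  then show "x \<in> {1..n}" "C = comp F n x"
    using i comp_eq_iff unfolding eq_rel_def by auto
qed

lemma eq_rel_nth_eq:
  assumes "\<forall>(a, b) \<in> F. pal T a b" "(x, y) \<in> eq_rel F n"
  shows "T ! (x - 1) = T ! (y - 1)"
proof -
  have edge: "T ! (i - 1) = T ! (j - 1)" if "eq_edge F n i j" for i j
  proof -
    from that obtain a b where ab: "(a, b) \<in> F" "a \<le> i" "j \<le> b" "i + j = a + b" "i < j"
      unfolding eq_edge_def by auto
    then have "T ! (i - 1) = T ! (a + b - i - 1)"
      using assms(1) unfolding pal_def by auto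
    moreover have "a + b - i - 1 = j - 1" using ab by auto
    ultimately show ?thesis by simp
  qed
  have "(x, y) \<in> {(i, j). eq_edge F n i j \<or> eq_edge F n j i}\<^sup>*"
    using assms(2) unfolding eq_rel_def by auto
  then show ?thesis
    by (induction rule: rtrancl_induct) (auto dest: edge)
qed

lemma pal_if_constant_on_eq_rel:
  assumes const: "\<And>x y. (x, y) \<in> eq_rel F n \<Longrightarrow> T ! (x - 1) = T ! (y - 1)"
    and "(a, b) \<in> F" "1 \<le> a" "b \<le> n"
  shows "pal T a b"
  unfolding pal_def
proof (intro allI impI)
  fix k assume k: "a \<le> k \<and> k \<le> b"
  consider "k < a + b - k" | "k = a + b - k" | "a + b - k < k" by linarith
  then show "T ! (k - 1) = T ! (a + b - k - 1)"
  proof cases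
    case 1
    then have "eq_edge F n k (a + b - k)"
      unfolding eq_edge_def using k assms(2-4) by (intro conjI bexI[of _ "(a, b)"]) auto
    then show ?thesis using const eq_edge_in_eq_rel by metis
  next
    case 3
    then have "eq_edge F n (a + b - k) k"
      unfolding eq_edge_def using k assms(2-4) by (intro conjI bexI[of _ "(a, b)"]) auto
    then show ?thesis using const eq_edge_in_eq_rel by metis
  qed simp
qed

lemma proper_coloring_iff:
  "proper_coloring F n \<psi> \<longleftrightarrow>
     (\<forall>i j. 1 \<le> i \<longrightarrow> i < j \<longrightarrow> j \<le> n \<longrightarrow> (i + 1, j - 1) \<in> F \<longrightarrow> \<psi> (comp F n i) \<noteq> \<psi> (comp F n j))"
proof
  assume proper: "proper_coloring F n \<psi>"
  show "\<forall>i j. 1 \<le> i \<longrightarrow> i < j \<longrightarrow> j \<le> n \<longrightarrow> (i + 1, j - 1) \<in> F \<longrightarrow> \<psi> (comp F n i) \<noteq> \<psi> (comp F n j)"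
  proof (intro allI impI)
    fix i j assume ij: "1 \<le> i" "i < j" "j \<le> n" "(i + 1, j - 1) \<in> F"
    then have "i \<in> {1..n}" "j \<in> {1..n}" by auto
    then have "comp F n i \<in> verts F n" "comp F n j \<in> verts F n" "i \<in> comp F n i" "j \<in> comp F n j"
      by (auto simp: verts_eq_image_comp comp_self)
    moreover from this have "adj F n (comp F n i) (comp F n j)"
      unfolding adj_def using ij by blast
    ultimately show "\<psi> (comp F n i) \<noteq> \<psi> (comp F n j)"
      using proper unfolding proper_coloring_def by blast
  qed
next
  assume "\<forall>i j. 1 \<le> i \<longrightarrow> i < j \<longrightarrow> j \<le> n \<longrightarrow> (i + 1, j - 1) \<in> F \<longrightarrow> \<psi> (comp F n i) \<noteq> \<psi> (comp F n j)"
  then show "proper_coloring F n \<psi>"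
    unfolding proper_coloring_def adj_def using verts_memD by metis
qed

lemma length_string_of: "length (string_of F n \<psi>) = n"
  unfolding string_of_def by simp

lemma nth_string_of: "k \<in> {1..n} \<Longrightarrow> string_of F n \<psi> ! (k - 1) = \<psi> (comp F n k)"
  unfolding string_of_def by (auto simp del: upt_Suc)

lemma set_string_of: "set (string_of F n \<psi>) = \<psi> ` verts F n"
  unfolding string_of_def verts_eq_image_comp by (auto simp del: upt_Suc)

lemma coloring_of_string_of: "C \<in> verts F n \<Longrightarrow> coloring_of (string_of F n \<psi>) C = \<psi> C"
proof -
  assume C: "C \<in> verts F n"
  then obtain i where "i \<in> {1..n}" "C = comp F n i" by (auto simp: verts_eq_image_comp)
  then have "(SOME x. x \<in> C) \<in> C" using comp_self by (metis someI)
  then show ?thesis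
    unfolding coloring_of_def using nth_string_of verts_memD[OF C] by metis
qed

lemma coloring_of_comp:
  assumes const: "\<And>x y. (x, y) \<in> eq_rel F n \<Longrightarrow> T ! (x - 1) = T ! (y - 1)" and "i \<in> {1..n}"
  shows "coloring_of T (comp F n i) = T ! (i - 1)"
proof -
  have "(SOME x. x \<in> comp F n i) \<in> comp F n i" using comp_self[OF assms(2)] by (rule someI)
  then show ?thesis unfolding coloring_of_def comp_def using const by auto
qed

lemma manacher_string_of:
  assumes "proper_coloring (fingerprint S) (length S) \<psi>"
  shows "manacher (string_of (fingerprint S) (length S) \<psi>) = manacher S"
proof -
  define F where "F = fingerprint S"
  define T where "T = string_of F (length S) \<psi>"
  have T_nth: "T ! (k - 1) = \<psi> (comp F (length S) k)" if "k \<in> {1..length S}" for k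
    using nth_string_of[OF that] unfolding T_def .
  have const: "T ! (x - 1) = T ! (y - 1)" if xy: "(x, y) \<in> eq_rel F (length S)" for x y
  proof -
    have "x \<in> {1..length S}" "y \<in> {1..length S}" using xy unfolding eq_rel_def by auto
    moreover from this have "comp F (length S) x = comp F (length S) y" using xy comp_eq_iff by blast
    ultimately show ?thesis using T_nth by simp
  qed
  have "pal T a b" if "(a, b) \<in> F" for a b
    using pal_if_constant_on_eq_rel[OF const that] fingerprintD[of a b S] that unfolding F_def by simp
  moreover have "T ! (i - 1) \<noteq> T ! (j - 1)"
    if "1 \<le> i" "i < j" "j \<le> length S" "(i + 1, j - 1) \<in> F" for i j
    using assms that T_nth unfolding proper_coloring_iff F_def by auto
  ultimately have "same_pals S T"
    unfolding same_pals_iff_fingerprint T_def F_def by (auto simp: length_string_of)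
  then show ?thesis unfolding manacher_eq_iff_same_pals T_def F_def .
qed

lemma reconstruction_constant_on_eq_rel:
  assumes "manacher T = manacher S" "(x, y) \<in> eq_rel (fingerprint S) (length S)"
  shows "T ! (x - 1) = T ! (y - 1)"
  using assms eq_rel_nth_eq unfolding manacher_eq_iff_same_pals same_pals_iff_fingerprint by blast

lemma proper_coloring_of_reconstruction:
  assumes "manacher T = manacher S"
  shows "proper_coloring (fingerprint S) (length S) (coloring_of T)"
  using assms coloring_of_comp[OF reconstruction_constant_on_eq_rel[OF assms]]
  unfolding proper_coloring_iff manacher_eq_iff_same_pals same_pals_iff_fingerprint by simp

lemma string_of_coloring_of_reconstruction:
  assumes "manacher T = manacher S"
  shows "string_of (fingerprint S) (length S) (coloring_of T) = T"
proof (rule nth_equalityI)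
  have "length T = length S" using assms unfolding manacher_eq_iff_same_pals same_pals_def by simp
  then show "length (string_of (fingerprint S) (length S) (coloring_of T)) = length T"
    by (simp add: length_string_of)
  fix k assume "k < length (string_of (fingerprint S) (length S) (coloring_of T))"
  then have k: "k + 1 \<in> {1..length S}" by (simp add: length_string_of)
  then have "string_of (fingerprint S) (length S) (coloring_of T) ! k =
      coloring_of T (comp (fingerprint S) (length S) (k + 1))"
    using nth_string_of[OF k] by simp
  also have "\<dots> = T ! k"
    using coloring_of_comp[OF reconstruction_constant_on_eq_rel[OF assms] k] by simp
  finally show "string_of (fingerprint S) (length S) (coloring_of T) ! k = T ! k" .
qed

lemma reconstruction_constant_on_verts:
  assumes "manacher T = manacher S" "C \<in> verts (fingerprint S) (length S)" "i \<in> C" "j \<in> C"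
  shows "T ! (i - 1) = T ! (j - 1)"
proof -
  have "(i, j) \<in> eq_rel (fingerprint S) (length S)"
    using verts_memD[OF assms(2,3)] verts_memD[OF assms(2,4)] comp_eq_iff by metis
  then show ?thesis by (rule reconstruction_constant_on_eq_rel[OF assms(1)])
qed

lemma ex_reconstruction_iff_ex_coloring:
  "(\<exists>T :: 'b list. length T = length S \<and> manacher T = manacher S \<and> card (set T) = k) \<longleftrightarrow>
   (\<exists>\<psi> :: nat set \<Rightarrow> 'b. proper_coloring (fingerprint S) (length S) \<psi>
      \<and> card (\<psi> ` verts (fingerprint S) (length S)) = k)"
proof
  assume "\<exists>T :: 'b list. length T = length S \<and> manacher T = manacher S \<and> card (set T) = k"
  then obtain T :: "'b list" where "manacher T = manacher S" "card (set T) = k" by blast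
  then show "\<exists>\<psi> :: nat set \<Rightarrow> 'b. proper_coloring (fingerprint S) (length S) \<psi>
      \<and> card (\<psi> ` verts (fingerprint S) (length S)) = k"
    using proper_coloring_of_reconstruction string_of_coloring_of_reconstruction set_string_of by metis
next
  assume "\<exists>\<psi> :: nat set \<Rightarrow> 'b. proper_coloring (fingerprint S) (length S) \<psi>
      \<and> card (\<psi> ` verts (fingerprint S) (length S)) = k"
  then show "\<exists>T :: 'b list. length T = length S \<and> manacher T = manacher S \<and> card (set T) = k"
    using manacher_string_of length_string_of set_string_of by metis
qed

theorem theorem4p1:
  fixes S :: "'a list" and A :: "nat list" and F :: "(nat \<times> nat) set" and n :: nat
  assumes "length S = n" and "A = manacher S" and "F = fingerprint S"
  shows
    "(\<forall>(\<psi> :: nat set \<Rightarrow> 'b) k. proper_coloring F n \<psi> \<and> card (\<psi> ` verts F n) = k \<longrightarrow>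
        manacher (string_of F n \<psi>) = A \<and> card (set (string_of F n \<psi>)) = k)
   \<and> (\<forall>T :: 'b list. length T = n \<and> manacher T = A \<longrightarrow>
        (\<forall>C\<in>verts F n. \<forall>i\<in>C. \<forall>j\<in>C. T ! (i - 1) = T ! (j - 1))
      \<and> proper_coloring F n (coloring_of T)
      \<and> string_of F n (coloring_of T) = T)
   \<and> (\<forall>\<psi> :: nat set \<Rightarrow> 'b. proper_coloring F n \<psi> \<longrightarrow>
        (\<forall>C\<in>verts F n. coloring_of (string_of F n \<psi>) C = \<psi> C))
   \<and> (LEAST k. \<exists>T :: nat list. length T = n \<and> manacher T = A \<and> card (set T) = k)
       = chromatic_number F n"
proof -
  have n: "n = length S" using assms(1) by simp
  show ?thesis
    unfolding assms(2,3) n chromatic_number_def ex_reconstruction_iff_ex_coloring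
    using reconstruction_constant_on_verts[of _ S]
    by (auto simp: manacher_string_of set_string_of proper_coloring_of_reconstruction
        string_of_coloring_of_reconstruction coloring_of_string_of)
qed

end
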